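(* There is an absolute constant $C>0$ such that the following holds. Let $I \subseteq [0,1]$ be an open interval of length $|I|$. Let $\chi$ be a primitive Dirichlet character modulo a prime $q$ of order $d$. Then for any $K \geq 1$, $$\Big|\,|\{1\le n < q : \{\arg(\chi(n))\} \in I\}| - q|I|\,\Big| \le C q\left(\frac{1}{K} + \frac{\log(1+\lfloor K/d\rfloor)}{d}\right),$$ where $\{t\}$ denotes the fractional part of $t$.
   Context: For $z$ on the unit circle, $\arg(z)$ is the unique element of $(-1/2,1/2]$ with $z=e^{2\pi i \arg(z)}$. *)

theory Defs
  imports "HOL-Analysis.Analysis" "HOL-Number_Theory.Number_Theory"
begin

definition dirichlet_char :: "nat \<Rightarrow> (nat \<Rightarrow> complex) \<Rightarrow> bool" where
  "dirichlet_char q chi \<longleftrightarrow> q > 0 \<and>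
     (\<forall>n. chi (n + q) = chi n) \<and>
     (\<forall>m n. chi (m * n) = chi m * chi n) \<and>
     chi 1 = 1 \<and>
     (\<forall>n. chi n = 0 \<longleftrightarrow> \<not> coprime n q)"

text \<open>chi (mod q) is induced by a character modulo q' (q' divides q) iff chi is
  q'-periodic on residues coprime to q.\<close>
definition induced_mod :: "nat \<Rightarrow> nat \<Rightarrow> (nat \<Rightarrow> complex) \<Rightarrow> bool" where
  "induced_mod q q' chi \<longleftrightarrow>
     (\<forall>m n. coprime m q \<and> coprime n q \<and> [m = n] (mod q') \<longrightarrow> chi m = chi n)"

definition primitive_dirichlet_char :: "nat \<Rightarrow> (nat \<Rightarrow> complex) \<Rightarrow> bool" where
  "primitive_dirichlet_char q chi \<longleftrightarrow> dirichlet_char q chi \<and>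
     (\<forall>q'. q' dvd q \<and> q' < q \<longrightarrow> \<not> induced_mod q q' chi)"

definition dchar_order :: "nat \<Rightarrow> (nat \<Rightarrow> complex) \<Rightarrow> nat" where
  "dchar_order q chi = (LEAST d. d > 0 \<and> (\<forall>n. coprime n q \<longrightarrow> chi n ^ d = 1))"

text \<open>Normalised argument in (-1/2, 1/2]: z = exp(2 pi i carg z) on the unit circle.\<close>
definition carg :: "complex \<Rightarrow> real" where
  "carg z = Arg z / (2 * pi)"

end

theory Submission
  imports Defs
begin

text \<open>On the nonzero residues modulo the prime q, the character \<open>chi\<close> is a homomorphism onto a
  finite multiplicative group of complex numbers, i.e. onto the m-th roots of unity for some
  m \<ge> d, and it takes every value equally often, namely (q - 1)/m times. Counting the n with
  \<open>{arg chi(n)} \<in> I\<close> thus reduces to counting the fractions j/m in I, which is m|I| up to an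
  error of 1; so the discrepancy is at most (q - 1)/m + 1 \<le> 2q/d. Finally
  1/(2d) \<le> 1/K + log(1 + \<lfloor>K/d\<rfloor>)/d for every K \<ge> 1, by the cases K < d and K \<ge> d.\<close>

lemma frac_carg_cis:
  assumes "0 \<le> t" "t < 1"
  shows "frac (carg (cis (2 * pi * t))) = t"
proof (cases "t \<le> 1/2")
  case True
  have "Arg (cis (2 * pi * t)) = 2 * pi * t"
    using assms True pi_gt_zero mult_left_mono[of t "1/2" "2 * pi"]
    by (intro Arg_cis) (auto intro: order.strict_trans2[of _ 0])
  then show ?thesis using assms by (simp add: carg_def frac_eq)
next
  case False
  have "cis (2 * pi * t) = cis (2 * pi * (t - 1))"
    by (simp add: right_diff_distrib flip: cis_divide)
  also have "Arg \<dots> = 2 * pi * (t - 1)"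
    using False assms by (intro Arg_cis) (auto simp: field_simps)
  finally have "carg (cis (2 * pi * t)) = t - 1" by (simp add: carg_def)
  then show ?thesis using assms by (metis diff_add_cancel frac_1_eq frac_eq)
qed

lemma finite_mult_closed_eq_roots_unity:
  fixes G :: "'a::{idom,real_normed_div_algebra} set"
  assumes "finite G" "G \<noteq> {}" "0 \<notin> G" and "\<And>z w. z \<in> G \<Longrightarrow> w \<in> G \<Longrightarrow> z * w \<in> G"
  shows "G = {z. z ^ card G = 1}"
proof -
  have card_pos: "card G > 0" using assms by (simp add: card_gt_0_iff)
  have root: "z ^ card G = 1" if "z \<in> G" for z
  proof -
    have inj: "inj_on ((*) z) G" using that \<open>0 \<notin> G\<close> by (auto simp: inj_on_def)
    have "(*) z ` G = G"
      using that assms inj by (intro endo_inj_surj) auto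
    then have "prod id G = prod ((*) z) G"
      using prod.reindex[OF inj, of id] by simp
    also have "\<dots> = z ^ card G * prod id G" by (simp add: prod.distrib)
    finally show ?thesis using assms by auto
  qed
  show ?thesis
  proof (rule card_subset_eq)
    show "finite {z :: 'a. z ^ card G = 1}" using card_pos by (intro finite_roots_unity) simp
    show "G \<subseteq> {z. z ^ card G = 1}" using root by blast
    show "card G = card {z :: 'a. z ^ card G = 1}"
      using card_pos \<open>G \<subseteq> _\<close> by (intro antisym card_roots_unity card_mono finite_roots_unity) auto
  qed
qed

lemma card_fractions_in_interval:
  fixes a b :: real
  assumes "m > 0" "0 \<le> a" "a < b" "b \<le> 1"
  shows "\<bar>real (card {j. j < m \<and> real j / real m \<in> {a<..<b}}) - real m * (b - a)\<bar> \<le> 1"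
proof -
  define lo where "lo = nat \<lfloor>a * m\<rfloor> + 1"
  define hi where "hi = nat \<lceil>b * m\<rceil>"
  have "{j. j < m \<and> real j / real m \<in> {a<..<b}} = {lo..<hi}"
  proof -
    have "real j / real m \<in> {a<..<b} \<longleftrightarrow> a * m < real j \<and> real j < b * m" for j
      using assms by (simp add: field_simps)
    moreover have "a * m < real j \<longleftrightarrow> lo \<le> j" for j
    proof -
      have "a * m < real j \<longleftrightarrow> \<lfloor>a * m\<rfloor> < int j" by (simp add: floor_less_iff)
      moreover have "0 \<le> \<lfloor>a * m\<rfloor>" using assms by simp
      ultimately show ?thesis unfolding lo_def by linarith
    qed
    moreover have "real j < b * m \<longleftrightarrow> j < hi" for j
    proof -
      have "real j < b * m \<longleftrightarrow> int j < \<lceil>b * m\<rceil>" by (simp add: less_ceiling_iff)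
      then show ?thesis unfolding hi_def by linarith
    qed
    moreover have "hi \<le> m"
      using assms unfolding hi_def by (simp add: ceiling_le_iff nat_le_iff)
    ultimately show ?thesis by auto
  qed
  moreover have "real lo = \<lfloor>a * m\<rfloor> + 1" "real hi = \<lceil>b * m\<rceil>"
    using assms unfolding lo_def hi_def by simp_all
  then have "a * m < lo" "lo \<le> a * m + 1" "b * m \<le> hi" "hi < b * m + 1"
    using floor_correct[of "a * m"] ceiling_correct[of "b * m"] by linarith+
  moreover have "lo \<le> hi"
  proof -
    have "a * m < b * m" using assms by simp
    then have "real lo < real (hi + 1)" using calculation(2-5) by simp
    then show ?thesis by simp
  qed
  ultimately show ?thesis by (simp add: of_nat_diff algebra_simps abs_le_iff)
qed

lemma card_roots_unity_frac_carg:
  assumes "m > 0"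
  shows "card {z :: complex. z ^ m = 1 \<and> frac (carg z) \<in> I} = card {j. j < m \<and> real j / real m \<in> I}"
proof -
  define f where "f = (\<lambda>j. cis (2 * pi * real j / real m))"
  have bij: "bij_betw f {..<m} {z. z ^ m = 1}"
    unfolding f_def using assms by (rule Complex.bij_betw_roots_unity)
  have frac_f: "frac (carg (f j)) = real j / real m" if "j < m" for j
    using frac_carg_cis[of "real j / real m"] that unfolding f_def by simp
  have "bij_betw f {j \<in> {..<m}. real j / real m \<in> I} {z \<in> {z. z ^ m = 1}. frac (carg z) \<in> I}"
    using bij frac_f by (intro bij_betw_Collect) auto
  then show ?thesis by (simp add: bij_betw_same_card)
qed

lemma dirichlet_char_mod_eq:
  assumes "dirichlet_char q chi"
  shows "chi (n mod q) = chi n"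
proof -
  have "chi (n mod q + q * k) = chi (n mod q)" for k
  proof (induction k)
    case (Suc k)
    have "chi (n mod q + q * Suc k) = chi ((n mod q + q * k) + q)" by (simp add: add_ac)
    also have "\<dots> = chi (n mod q + q * k)" using assms by (simp add: dirichlet_char_def)
    finally show ?case using Suc by simp
  qed simp
  then show ?thesis by (metis mod_mult_div_eq)
qed

lemma prime_mult_mod_mem_residues:
  fixes q :: nat
  assumes "prime q" "x \<in> {1..<q}" "y \<in> {1..<q}"
  shows "x * y mod q \<in> {1..<q}"
proof -
  have "\<not> q dvd x" "\<not> q dvd y" using assms(2,3) by (auto dest: dvd_imp_le)
  then have "\<not> q dvd x * y" using assms(1) by (simp add: prime_dvd_mult_iff)
  then show ?thesis using prime_gt_0_nat[OF assms(1)] by (simp add: dvd_eq_mod_eq_0 Suc_le_eq)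
qed

lemma prime_coprime_residue:
  fixes q :: nat
  assumes "prime q" "n \<in> {1..<q}"
  shows "coprime n q"
proof -
  have "\<not> q dvd n" using assms(2) by (auto dest: dvd_imp_le)
  then show ?thesis using assms(1) by (metis prime_imp_coprime coprime_commute)
qed

lemma prime_inj_on_mult_mod:
  fixes q :: nat
  assumes "prime q" "x \<in> {1..<q}"
  shows "inj_on (\<lambda>n. x * n mod q) {1..<q}"
proof (rule inj_onI)
  fix m n assume mn: "m \<in> {1..<q}" "n \<in> {1..<q}" "x * m mod q = x * n mod q"
  have "coprime x q" using assms by (rule prime_coprime_residue)
  moreover have "[x * m = x * n] (mod q)" using mn(3) by (simp add: cong_def)
  ultimately have "[m = n] (mod q)" by (simp add: cong_mult_lcancel_nat)
  then show "m = n" using mn(1,2) by (simp add: cong_less_modulus_unique_nat)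
qed

context
  fixes q :: nat and chi :: "nat \<Rightarrow> complex"
  assumes prime: "prime q" and chi: "dirichlet_char q chi"
begin

lemma dirichlet_char_mult_mod: "chi (x * y mod q) = chi x * chi y"
  using chi by (simp add: dirichlet_char_mod_eq[OF chi] dirichlet_char_def)

lemma dirichlet_char_nonzero: "n \<in> {1..<q} \<Longrightarrow> chi n \<noteq> 0"
  using chi prime_coprime_residue[OF prime] by (simp add: dirichlet_char_def)

lemma dirichlet_char_values_eq_roots_unity:
  "chi ` {1..<q} = {z. z ^ card (chi ` {1..<q}) = 1}"
proof (rule finite_mult_closed_eq_roots_unity)
  show "chi ` {1..<q} \<noteq> {}" using prime_gt_1_nat[OF prime] by simp
  show "0 \<notin> chi ` {1..<q}" using dirichlet_char_nonzero by auto
  show "z * w \<in> chi ` {1..<q}" if zw: "z \<in> chi ` {1..<q}" "w \<in> chi ` {1..<q}" for z w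
  proof -
    obtain x y where "x \<in> {1..<q}" "y \<in> {1..<q}" "z = chi x" "w = chi y" using zw by blast
    then have "x * y mod q \<in> {1..<q}" "z * w = chi (x * y mod q)"
      using prime_mult_mod_mem_residues[OF prime] by (simp_all add: dirichlet_char_mult_mod)
    then show ?thesis by blast
  qed
qed simp

lemma card_dirichlet_char_fibre:
  assumes "z \<in> chi ` {1..<q}"
  shows "card {n \<in> {1..<q}. chi n = z} = card {n \<in> {1..<q}. chi n = 1}"
proof -
  obtain x where x: "x \<in> {1..<q}" "chi x = z" using assms by auto
  define \<sigma> where "\<sigma> = (\<lambda>n. x * n mod q)"
  have inj: "inj_on \<sigma> {1..<q}" unfolding \<sigma>_def using prime x(1) by (rule prime_inj_on_mult_mod)
  have onto: "\<sigma> ` {1..<q} = {1..<q}"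
    using inj prime_mult_mod_mem_residues[OF prime x(1)] unfolding \<sigma>_def
    by (intro endo_inj_surj) auto
  have "chi (\<sigma> n) = z \<longleftrightarrow> chi n = 1" for n
    using dirichlet_char_nonzero[OF x(1)] x(2) by (auto simp: \<sigma>_def dirichlet_char_mult_mod)
  then have "bij_betw \<sigma> {n \<in> {1..<q}. chi n = 1} {n \<in> {1..<q}. chi n = z}"
    using inj onto by (intro bij_betw_Collect) (auto simp: bij_betw_def)
  then show ?thesis by (simp add: bij_betw_same_card)
qed

lemma card_dirichlet_char_preimage:
  assumes "A \<subseteq> chi ` {1..<q}"
  shows "card {n \<in> {1..<q}. chi n \<in> A} = card A * card {n \<in> {1..<q}. chi n = 1}"
proof -
  have "finite A" using assms finite_surj by blast
  have "{n \<in> {1..<q}. chi n \<in> A} = (\<Union>z\<in>A. {n \<in> {1..<q}. chi n = z})" by auto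
  also have "card \<dots> = (\<Sum>z\<in>A. card {n \<in> {1..<q}. chi n = z})"
    using \<open>finite A\<close> by (intro card_UN_disjoint) auto
  also have "\<dots> = (\<Sum>z\<in>A. card {n \<in> {1..<q}. chi n = 1})"
    using assms by (intro sum.cong refl) (rule card_dirichlet_char_fibre, blast)
  finally show ?thesis by simp
qed

lemma
  shows dchar_order_pos: "0 < dchar_order q chi"
    and dchar_order_le_card_values: "dchar_order q chi \<le> card (chi ` {1..<q})"
proof -
  let ?m = "card (chi ` {1..<q})"
  define P where "P = (\<lambda>d. 0 < d \<and> (\<forall>n. coprime n q \<longrightarrow> chi n ^ d = 1))"
  have "chi n ^ ?m = 1" if "coprime n q" for n
  proof -
    have "\<not> q dvd n" using that prime by auto
    then have "n mod q \<in> {1..<q}" using prime_gt_0_nat[OF prime] by (simp add: dvd_eq_mod_eq_0)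
    then have "chi n \<in> chi ` {1..<q}" using dirichlet_char_mod_eq[OF chi] by (metis image_eqI)
    then show ?thesis using dirichlet_char_values_eq_roots_unity by blast
  qed
  moreover have "?m > 0" using prime_gt_1_nat[OF prime] by (simp add: card_gt_0_iff)
  ultimately have "P ?m" by (simp add: P_def)
  then have "P (Least P)" "Least P \<le> ?m" by (rule LeastI, rule Least_le)
  then show "0 < dchar_order q chi" "dchar_order q chi \<le> ?m"
    unfolding dchar_order_def P_def by simp_all
qed

lemma dirichlet_char_arg_discrepancy:
  fixes a b :: real
  assumes "0 \<le> a" "a < b" "b \<le> 1"
  shows "\<bar>real (card {n. 1 \<le> n \<and> n < q \<and> frac (carg (chi n)) \<in> {a<..<b}}) - real q * (b - a)\<bar>
    \<le> 2 * real q / real (dchar_order q chi)"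
proof -
  define m where "m = card (chi ` {1..<q})"
  define k where "k = card {n \<in> {1..<q}. chi n = 1}"
  define c where "c = card {j. j < m \<and> real j / real m \<in> {a<..<b}}"
  have d: "0 < dchar_order q chi" "dchar_order q chi \<le> m"
    using dchar_order_pos dchar_order_le_card_values by (simp_all add: m_def)
  have chi_values: "chi ` {1..<q} = {z. z ^ m = 1}"
    using dirichlet_char_values_eq_roots_unity by (simp add: m_def)
  define R where "R = {z. z ^ m = 1 \<and> frac (carg z) \<in> {a<..<b}}"
  have "R \<subseteq> chi ` {1..<q}" using chi_values by (auto simp: R_def)
  then have "card {n \<in> {1..<q}. chi n \<in> R} = card R * k"
    unfolding k_def by (rule card_dirichlet_char_preimage)
  moreover have "card R = c" unfolding R_def c_def using d by (intro card_roots_unity_frac_carg) simp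
  moreover have "{n. 1 \<le> n \<and> n < q \<and> frac (carg (chi n)) \<in> {a<..<b}} = {n \<in> {1..<q}. chi n \<in> R}"
    using chi_values by (auto simp: R_def)
  ultimately have count: "card {n. 1 \<le> n \<and> n < q \<and> frac (carg (chi n)) \<in> {a<..<b}} = c * k"
    by simp
  have "{n \<in> {1..<q}. chi n \<in> chi ` {1..<q}} = {1..<q}" by blast
  then have "q - 1 = m * k"
    using card_dirichlet_char_preimage[of "chi ` {1..<q}"] by (simp add: m_def k_def)
  then have q_eq: "real q = real m * real k + 1"
    using prime_gt_1_nat[OF prime] by (simp flip: of_nat_mult)
  have "m \<le> q - 1" unfolding m_def using card_image_le[of "{1..<q}" chi] by simp
  have c_err: "\<bar>real c - real m * (b - a)\<bar> \<le> 1"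
    unfolding c_def using card_fractions_in_interval d assms by simp
  have "\<bar>real (c * k) - real q * (b - a)\<bar> = \<bar>real k * (real c - real m * (b - a)) - (b - a)\<bar>"
    by (simp add: q_eq algebra_simps)
  also have "\<dots> \<le> \<bar>real k * (real c - real m * (b - a))\<bar> + \<bar>b - a\<bar>"
    by (rule abs_triangle_ineq4)
  also have "\<dots> \<le> real k * 1 + 1"
    using mult_left_mono[OF c_err, of "real k"] assms by (simp add: abs_mult)
  also have "\<dots> \<le> 2 * real q / real m"
    using \<open>m \<le> q - 1\<close> d q_eq by (simp add: field_simps)
  also have "\<dots> \<le> 2 * real q / real (dchar_order q chi)"
    using d by (simp add: frac_le)
  finally show ?thesis by (simp only: count)
qed

end

lemma inverse_double_le_inverse_add_ln_floor:
  fixes K :: real and d :: nat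
  assumes "1 \<le> K" "0 < d"
  shows "1 / (2 * real d) \<le> 1 / K + ln (1 + real_of_int \<lfloor>K / real d\<rfloor>) / real d"
proof (cases "K < real d")
  case True
  then have "1 / (2 * real d) \<le> 1 / K" using assms by (simp add: field_simps)
  moreover have "0 \<le> ln (1 + real_of_int \<lfloor>K / real d\<rfloor>) / real d" using assms by simp
  ultimately show ?thesis by linarith
next
  case False
  then have "1 \<le> \<lfloor>K / real d\<rfloor>" using assms by (simp add: le_floor_iff field_simps)
  then have "(2 :: real) \<le> 1 + real_of_int \<lfloor>K / real d\<rfloor>" by linarith
  then have "ln 2 \<le> ln (1 + real_of_int \<lfloor>K / real d\<rfloor>)" by (subst ln_le_cancel_iff) linarith+
  then have "1 / 2 \<le> ln (1 + real_of_int \<lfloor>K / real d\<rfloor>)" using ln2_ge_two_thirds by linarith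
  then have "1 / (2 * real d) \<le> ln (1 + real_of_int \<lfloor>K / real d\<rfloor>) / real d"
    using assms by (simp add: field_simps)
  moreover have "0 \<le> 1 / K" using assms by simp
  ultimately show ?thesis by linarith
qed

theorem lemma2p4:
  shows "\<exists>C>0. \<forall>(q::nat) (chi::nat \<Rightarrow> complex) (d::nat) (a::real) (b::real) (K::real).
     prime q \<and> primitive_dirichlet_char q chi \<and> d = dchar_order q chi \<and>
     0 \<le> a \<and> a < b \<and> b \<le> 1 \<and> K \<ge> 1 \<longrightarrow>
     \<bar>real (card {n. 1 \<le> n \<and> n < q \<and> frac (carg (chi n)) \<in> {a<..<b}}) - real q * (b - a)\<bar>
       \<le> C * real q * (1 / K + ln (1 + real_of_int \<lfloor>K / real d\<rfloor>) / real d)"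
proof (intro exI[of _ 4] conjI allI impI)
  fix q :: nat and chi :: "nat \<Rightarrow> complex" and d :: nat and a b K :: real
  assume h: "prime q \<and> primitive_dirichlet_char q chi \<and> d = dchar_order q chi \<and>
     0 \<le> a \<and> a < b \<and> b \<le> 1 \<and> K \<ge> 1"
  then have q: "prime q" and chi: "dirichlet_char q chi"
    by (simp_all add: primitive_dirichlet_char_def)
  have d: "0 < d" using dchar_order_pos[OF q chi] h by simp
  have "\<bar>real (card {n. 1 \<le> n \<and> n < q \<and> frac (carg (chi n)) \<in> {a<..<b}}) - real q * (b - a)\<bar>
      \<le> 2 * real q / real d"
    using dirichlet_char_arg_discrepancy[OF q chi] h by simp
  also have "\<dots> = 4 * real q * (1 / (2 * real d))" by simp
  also have "\<dots> \<le> 4 * real q * (1 / K + ln (1 + real_of_int \<lfloor>K / real d\<rfloor>) / real d)"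
    using inverse_double_le_inverse_add_ln_floor[OF _ d, of K] h by (intro mult_left_mono) auto
  finally show "\<bar>real (card {n. 1 \<le> n \<and> n < q \<and> frac (carg (chi n)) \<in> {a<..<b}}) - real q * (b - a)\<bar>
      \<le> 4 * real q * (1 / K + ln (1 + real_of_int \<lfloor>K / real d\<rfloor>) / real d)" .
qed simp

end
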